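(* Let $P\in\mathcal{P}$ and $\nu:\mathcal{P}\to\mathcal{H}$. Then $\nu$ is pathwise differentiable at $P$ with local parameter $\dot{\nu}_P=\eta_P$ if both of the following hold: (i) $\eta_P:\dot{\mathcal{P}}_P\to\mathcal{H}$ is bounded and linear, and there exists a set of scores $\mathcal{S}(P)$ whose $L^2(P)$-closure equals $\dot{\mathcal{P}}_P$ such that for every $s\in\mathcal{S}(P)$ there is at least one submodel $\{P_\epsilon:\epsilon\}\in\mathscr{P}(P,\mathcal{P},s)$ with $\|\nu(P_\epsilon)-\nu(P)-\epsilon\,\eta_P(s)\|_{\mathcal{H}}=o(\epsilon)$; and (ii) $\nu$ is locally Lipschitz at $P$: there exist $c,\delta\in(0,\infty)$ such that $\|\nu(P_1)-\nu(P_2)\|_{\mathcal{H}}\le cH(P_1,P_2)$ for all $P_1,P_2\in B_\delta(P)$, where $B_\delta(P)=\{P'\in\mathcal{P}:H(P,P')\le\delta\}$.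
   Context: Let $(\mathcal{Z},\mathbf{B})$ be a Polish space and $\mathcal{P}$ a model of probability distributions on it dominated by a $\sigma$-finite measure $\lambda$. $H(P,P')=[\int(\sqrt{dP}-\sqrt{dP'})^2]^{1/2}$ is the Hellinger distance. For $P\in\mathcal{P}$ and $s\in L^2(P)$, $\mathscr{P}(P,\mathcal{P},s)$ is the set of submodels $\{P_\epsilon:\epsilon\in[0,\delta)\}\subset\mathcal{P}$ with $\|p_\epsilon^{1/2}-p^{1/2}-\epsilon sp^{1/2}/2\|_{L^2(\lambda)}=o(\epsilon)$ as $\epsilon\to0$ ($p_\epsilon,p$ the $\lambda$-densities). The tangent set at $P$ is $\{s:\mathscr{P}(P,\mathcal{P},s)\neq\emptyset\}$ and the tangent space $\dot{\mathcal{P}}_P$ its closed linear span in $L^2(P)$. $\mathcal{H}$ is a real separable Hilbert space. $\nu$ is pathwise differentiable at $P$ with local parameter $\dot{\nu}_P$ if $\dot{\nu}_P:\dot{\mathcal{P}}_P\to\mathcal{H}$ is continuous linear and $\|\nu(P_\epsilon)-\nu(P)-\epsilon\dot{\nu}_P(s)\|_{\mathcal{H}}=o(\epsilon)$ for every $s$ in the tangent set and every submodel in $\mathscr{P}(P,\mathcal{P},s)$. *)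

theory Defs
  imports "HOL-Probability.Probability"
begin

definition dens :: "'a measure \<Rightarrow> 'a measure \<Rightarrow> 'a \<Rightarrow> real" where
  "dens lam Q x = enn2real (RN_deriv lam Q x)"

definition hellinger :: "'a measure \<Rightarrow> 'a measure \<Rightarrow> 'a measure \<Rightarrow> real" where
  "hellinger lam Q Q' = sqrt (\<integral>x. (sqrt (dens lam Q x) - sqrt (dens lam Q' x))\<^sup>2 \<partial>lam)"

definition L2 :: "'a measure \<Rightarrow> ('a \<Rightarrow> real) set" where
  "L2 M = {f. f \<in> borel_measurable M \<and> integrable M (\<lambda>x. (f x)\<^sup>2)}"

definition L2norm :: "'a measure \<Rightarrow> ('a \<Rightarrow> real) \<Rightarrow> real" where
  "L2norm M f = sqrt (\<integral>x. (f x)\<^sup>2 \<partial>M)"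

definition L2closure :: "'a measure \<Rightarrow> ('a \<Rightarrow> real) set \<Rightarrow> ('a \<Rightarrow> real) set" where
  "L2closure M A = {f \<in> L2 M. \<forall>e>0. \<exists>g\<in>A. L2norm M (\<lambda>x. f x - g x) < e}"

definition linspan :: "('a \<Rightarrow> real) set \<Rightarrow> ('a \<Rightarrow> real) set" where
  "linspan A = {f. \<exists>(n::nat) c g. (\<forall>i<n. g i \<in> A) \<and> f = (\<lambda>x. \<Sum>i<n. c i * g i x)}"

text \<open>Submodels through P with score s (differentiable in quadratic mean):
  the set \<open>\<P>(P, Model, s)\<close>.\<close>
definition submodels :: "'a measure \<Rightarrow> 'a measure set \<Rightarrow> 'a measure \<Rightarrow> ('a \<Rightarrow> real)
    \<Rightarrow> (real \<Rightarrow> 'a measure) set" where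
  "submodels lam Model P s = {Pe. \<exists>\<delta>>0. (\<forall>\<epsilon>\<in>{0..<\<delta>}. Pe \<epsilon> \<in> Model) \<and>
     ((\<lambda>\<epsilon>. L2norm lam (\<lambda>x. sqrt (dens lam (Pe \<epsilon>) x) - sqrt (dens lam P x)
                 - \<epsilon> * s x * sqrt (dens lam P x) / 2) / \<epsilon>) \<longlongrightarrow> 0) (at_right 0)}"

definition tangent_set :: "'a measure \<Rightarrow> 'a measure set \<Rightarrow> 'a measure \<Rightarrow> ('a \<Rightarrow> real) set" where
  "tangent_set lam Model P = {s \<in> L2 P. submodels lam Model P s \<noteq> {}}"

definition tangent_space :: "'a measure \<Rightarrow> 'a measure set \<Rightarrow> 'a measure \<Rightarrow> ('a \<Rightarrow> real) set" where
  "tangent_space lam Model P = L2closure P (linspan (tangent_set lam Model P))"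

definition bounded_linear_on :: "'a measure \<Rightarrow> ('a \<Rightarrow> real) set \<Rightarrow> (('a \<Rightarrow> real) \<Rightarrow> 'b::real_normed_vector) \<Rightarrow> bool" where
  "bounded_linear_on P T \<eta> \<longleftrightarrow>
     (\<forall>s\<in>T. \<forall>t\<in>T. \<forall>a b. \<eta> (\<lambda>x. a * s x + b * t x) = a *\<^sub>R \<eta> s + b *\<^sub>R \<eta> t) \<and>
     (\<exists>C. \<forall>s\<in>T. norm (\<eta> s) \<le> C * L2norm P s)"

definition pathwise_differentiable ::
  "'a measure \<Rightarrow> 'a measure set \<Rightarrow> ('a measure \<Rightarrow> 'b::real_normed_vector) \<Rightarrow> 'a measure
     \<Rightarrow> (('a \<Rightarrow> real) \<Rightarrow> 'b) \<Rightarrow> bool" where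
  "pathwise_differentiable lam Model \<nu> P \<eta> \<longleftrightarrow>
     bounded_linear_on P (tangent_space lam Model P) \<eta> \<and>
     (\<forall>s\<in>tangent_set lam Model P. \<forall>Pe\<in>submodels lam Model P s.
        ((\<lambda>\<epsilon>. norm (\<nu> (Pe \<epsilon>) - \<nu> P - \<epsilon> *\<^sub>R \<eta> s) / \<epsilon>) \<longlongrightarrow> 0) (at_right 0))"

end

theory Submission
  imports Defs
begin

text \<open>Fix a score \<open>s\<close> and a submodel \<open>P\<^sub>\<epsilon>\<close> with score \<open>s\<close>. Approximate \<open>s\<close> in \<open>L\<^sup>2(P)\<close> by
  some \<open>s'\<close> of the dense set \<open>\<S>(P)\<close>, along whose submodel \<open>Q\<^sub>\<epsilon>\<close> the parameter \<open>\<nu>\<close> is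
  differentiable. Both square-root densities expand to first order around \<open>\<surd>p\<close>, so
  \<open>H(P\<^sub>\<epsilon>, Q\<^sub>\<epsilon>) \<le> \<epsilon> \<parallel>s - s'\<parallel> / 2 + o(\<epsilon>)\<close>; in particular both submodels eventually
  lie in the ball where \<open>\<nu>\<close> is \<open>c\<close>-Lipschitz. Since \<open>\<eta>\<close> is \<open>K\<close>-Lipschitz on the tangent
  space, the difference quotient of \<open>\<nu>\<close> along \<open>P\<^sub>\<epsilon>\<close> is eventually within
  \<open>(c/2 + K) \<parallel>s - s'\<parallel> + o(1)\<close> of zero, and \<open>\<parallel>s - s'\<parallel>\<close> can be made arbitrarily small.\<close>

section \<open>Square-integrable functions\<close>

lemma L2_lincomb:
  assumes "f \<in> L2 M" and "g \<in> L2 M"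
  shows "(\<lambda>x. a * f x + b * g x) \<in> L2 M"
proof -
  have [measurable]: "f \<in> borel_measurable M" "g \<in> borel_measurable M"
    and "integrable M (\<lambda>x. (f x)\<^sup>2)" "integrable M (\<lambda>x. (g x)\<^sup>2)"
    using assms by (auto simp: L2_def)
  then have "integrable M (\<lambda>x. 2 * a\<^sup>2 * (f x)\<^sup>2 + 2 * b\<^sup>2 * (g x)\<^sup>2)"
    by simp
  moreover have "(\<lambda>x. (a * f x + b * g x)\<^sup>2) \<in> borel_measurable M"
    by measurable
  moreover have "norm ((a * f x + b * g x)\<^sup>2) \<le> norm (2 * a\<^sup>2 * (f x)\<^sup>2 + 2 * b\<^sup>2 * (g x)\<^sup>2)" for x
  proof -
    have "(a * f x + b * g x)\<^sup>2 \<le> 2 * a\<^sup>2 * (f x)\<^sup>2 + 2 * b\<^sup>2 * (g x)\<^sup>2"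
      using zero_le_power2[of "a * f x - b * g x"] by (simp add: power2_eq_square algebra_simps)
    then show ?thesis by simp
  qed
  ultimately have "integrable M (\<lambda>x. (a * f x + b * g x)\<^sup>2)"
    by (rule Bochner_Integration.integrable_bound[OF _ _ AE_I2])
  then show ?thesis by (simp add: L2_def)
qed

lemma L2_add: "f \<in> L2 M \<Longrightarrow> g \<in> L2 M \<Longrightarrow> (\<lambda>x. f x + g x) \<in> L2 M"
  using L2_lincomb[of f M g 1 1] by simp

lemma L2_diff: "f \<in> L2 M \<Longrightarrow> g \<in> L2 M \<Longrightarrow> (\<lambda>x. f x - g x) \<in> L2 M"
  using L2_lincomb[of f M g 1 "-1"] by simp

lemma L2_cmult: "f \<in> L2 M \<Longrightarrow> (\<lambda>x. a * f x) \<in> L2 M"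
  using L2_lincomb[of f M f a 0] by simp

lemma L2_integrable_mult:
  assumes "f \<in> L2 M" and "g \<in> L2 M"
  shows "integrable M (\<lambda>x. f x * g x)"
proof -
  have [measurable]: "f \<in> borel_measurable M" "g \<in> borel_measurable M"
    and "integrable M (\<lambda>x. (f x)\<^sup>2)" "integrable M (\<lambda>x. (g x)\<^sup>2)"
    using assms by (auto simp: L2_def)
  then have "integrable M (\<lambda>x. (f x)\<^sup>2 + (g x)\<^sup>2)"
    by simp
  moreover have "(\<lambda>x. f x * g x) \<in> borel_measurable M"
    by measurable
  moreover have "norm (f x * g x) \<le> norm ((f x)\<^sup>2 + (g x)\<^sup>2)" for x
  proof -
    have "2 * (\<bar>f x\<bar> * \<bar>g x\<bar>) \<le> (f x)\<^sup>2 + (g x)\<^sup>2"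
      using zero_le_power2[of "\<bar>f x\<bar> - \<bar>g x\<bar>"] by (simp add: power2_eq_square algebra_simps)
    then show ?thesis
      unfolding real_norm_def abs_mult
      using mult_nonneg_nonneg[OF abs_ge_zero abs_ge_zero, of "f x" "g x"] by linarith
  qed
  ultimately show ?thesis
    by (rule Bochner_Integration.integrable_bound[OF _ _ AE_I2])
qed

lemma L2norm_nonneg: "0 \<le> L2norm M f"
  by (simp add: L2norm_def)

lemma L2norm_cmult: "L2norm M (\<lambda>x. a * f x) = \<bar>a\<bar> * L2norm M f"
  by (simp add: L2norm_def power_mult_distrib real_sqrt_mult)

lemma le_sqrt_mult_if_quadratic_nonneg:
  fixes A B X :: real
  assumes quadratic: "\<And>t. 0 \<le> A - 2 * t * X + t\<^sup>2 * B" and "0 \<le> A" "0 \<le> B"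
  shows "X \<le> sqrt A * sqrt B"
proof (cases "B = 0")
  case True
  have "X = 0"
  proof (rule ccontr)
    assume "X \<noteq> 0"
    then show False
      using quadratic[of "(A + 1) / X"] True \<open>0 \<le> A\<close> by simp
  qed
  then show ?thesis using assms by simp
next
  case False
  then have "B > 0" using assms by simp
  then have "X\<^sup>2 \<le> A * B"
    using quadratic[of "X / B"] by (simp add: power2_eq_square field_simps)
  then have "sqrt (X\<^sup>2) \<le> sqrt (A * B)"
    by (rule real_sqrt_le_mono)
  then show ?thesis by (simp add: real_sqrt_mult)
qed

lemma L2norm_add_le:
  assumes f: "f \<in> L2 M" and g: "g \<in> L2 M"
  shows "L2norm M (\<lambda>x. f x + g x) \<le> L2norm M f + L2norm M g"
proof -
  have "integrable M (\<lambda>x. (f x)\<^sup>2)" "integrable M (\<lambda>x. (g x)\<^sup>2)"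
    using f g by (auto simp: L2_def)
  note integrable = this L2_integrable_mult[OF f g]
  define A where "A = (\<integral>x. (f x)\<^sup>2 \<partial>M)"
  define B where "B = (\<integral>x. (g x)\<^sup>2 \<partial>M)"
  define X where "X = (\<integral>x. f x * g x \<partial>M)"
  have "0 \<le> A" "0 \<le> B" by (simp_all add: A_def B_def)
  have "0 \<le> A - 2 * t * X + t\<^sup>2 * B" for t
  proof -
    have "0 \<le> (\<integral>x. (f x - t * g x)\<^sup>2 \<partial>M)"
      by simp
    also have "\<dots> = (\<integral>x. (f x)\<^sup>2 - (2 * t) * (f x * g x) + t\<^sup>2 * (g x)\<^sup>2 \<partial>M)"
      by (simp add: power2_eq_square algebra_simps)
    also have "\<dots> = A - 2 * t * X + t\<^sup>2 * B"
      using integrable by (simp add: A_def B_def X_def)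
    finally show ?thesis .
  qed
  then have "X \<le> sqrt A * sqrt B"
    using \<open>0 \<le> A\<close> \<open>0 \<le> B\<close> by (rule le_sqrt_mult_if_quadratic_nonneg)
  have "(\<integral>x. (f x + g x)\<^sup>2 \<partial>M) = (\<integral>x. (f x)\<^sup>2 + 2 * (f x * g x) + (g x)\<^sup>2 \<partial>M)"
    by (simp add: power2_eq_square algebra_simps)
  also have "\<dots> = A + 2 * X + B"
    using integrable by (simp add: A_def B_def X_def)
  also have "\<dots> \<le> (sqrt A + sqrt B)\<^sup>2"
    using \<open>X \<le> sqrt A * sqrt B\<close> \<open>0 \<le> A\<close> \<open>0 \<le> B\<close> by (simp add: power2_eq_square algebra_simps)
  finally have "sqrt (\<integral>x. (f x + g x)\<^sup>2 \<partial>M) \<le> sqrt ((sqrt A + sqrt B)\<^sup>2)"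
    by (rule real_sqrt_le_mono)
  then show ?thesis
    unfolding L2norm_def A_def B_def by simp
qed

lemma L2norm_diff_le:
  assumes "f \<in> L2 M" and "g \<in> L2 M"
  shows "L2norm M (\<lambda>x. f x - g x) \<le> L2norm M f + L2norm M g"
  using L2norm_add_le[OF assms(1) L2_cmult[OF assms(2), of "-1"]] L2norm_cmult[of M "-1" g] by simp

section \<open>Tangent spaces\<close>

lemma subset_linspan: "A \<subseteq> linspan A"
proof
  fix f assume "f \<in> A"
  then show "f \<in> linspan A"
    unfolding linspan_def by (intro CollectI exI[of _ 1] exI[of _ "\<lambda>_. 1"] exI[of _ "\<lambda>_. f"]) auto
qed

lemma linspan_subset_L2:
  assumes "A \<subseteq> L2 M"
  shows "linspan A \<subseteq> L2 M"
proof
  fix f assume "f \<in> linspan A"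
  then obtain n :: nat and c g where g: "\<forall>i<n. g i \<in> A" and f: "f = (\<lambda>x. \<Sum>i<n. c i * g i x)"
    unfolding linspan_def by blast
  have "(\<lambda>x. \<Sum>i<m. c i * g i x) \<in> L2 M" if "m \<le> n" for m
    using that
  proof (induction m)
    case 0
    then show ?case by (simp add: L2_def)
  next
    case (Suc m)
    then have "(\<lambda>x. (\<Sum>i<m. c i * g i x) + c m * g m x) \<in> L2 M"
      using g assms by (intro L2_add L2_cmult) auto
    then show ?case by simp
  qed
  then show "f \<in> L2 M" using f by simp
qed

lemma linspan_lincomb:
  assumes "f \<in> linspan A" and "h \<in> linspan A"
  shows "(\<lambda>x. a * f x + b * h x) \<in> linspan A"
proof -
  obtain n :: nat and c g where g: "\<forall>i<n. g i \<in> A" and f: "f = (\<lambda>x. \<Sum>i<n. c i * g i x)"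
    using assms(1) unfolding linspan_def by blast
  obtain m :: nat and c' g' where g': "\<forall>i<m. g' i \<in> A" and h: "h = (\<lambda>x. \<Sum>i<m. c' i * g' i x)"
    using assms(2) unfolding linspan_def by blast
  define C where "C i = (if i < n then a * c i else b * c' (i - n))" for i
  define G where "G i = (if i < n then g i else g' (i - n))" for i
  have "(\<Sum>i<n+k. C i * G i x) = a * (\<Sum>i<n. c i * g i x) + b * (\<Sum>i<k. c' i * g' i x)" for k x
  proof (induction k)
    case 0
    have "(\<Sum>i<n. C i * G i x) = (\<Sum>i<n. a * (c i * g i x))"
      by (rule sum.cong) (auto simp: C_def G_def)
    then show ?case by (simp add: sum_distrib_left)
  next
    case (Suc k)
    then show ?case by (simp add: C_def G_def algebra_simps)
  qed
  then have "(\<lambda>x. a * f x + b * h x) = (\<lambda>x. \<Sum>i<n+m. C i * G i x)"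
    using f h by simp
  moreover have "\<forall>i<n+m. G i \<in> A"
    using g g' by (auto simp: G_def)
  ultimately show ?thesis
    unfolding linspan_def by blast
qed

lemma subset_L2closure:
  assumes "X \<subseteq> L2 M"
  shows "X \<subseteq> L2closure M X"
proof
  fix f assume "f \<in> X"
  moreover have "L2norm M (\<lambda>x. f x - f x) = 0"
    by (simp add: L2norm_def)
  ultimately show "f \<in> L2closure M X"
    using assms unfolding L2closure_def by force
qed

lemma L2closure_lincomb:
  assumes X: "X \<subseteq> L2 M"
    and X_lincomb: "\<And>f g. f \<in> X \<Longrightarrow> g \<in> X \<Longrightarrow> (\<lambda>x. a * f x + b * g x) \<in> X"
    and f: "f \<in> L2closure M X" and g: "g \<in> L2closure M X"
  shows "(\<lambda>x. a * f x + b * g x) \<in> L2closure M X"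
proof -
  have fL: "f \<in> L2 M" and gL: "g \<in> L2 M"
    using f g by (auto simp: L2closure_def)
  have "\<exists>h\<in>X. L2norm M (\<lambda>x. a * f x + b * g x - h x) < e" if "e > 0" for e
  proof -
    define ea where "ea = e / (2 * (\<bar>a\<bar> + 1))"
    define eb where "eb = e / (2 * (\<bar>b\<bar> + 1))"
    have "ea > 0" "eb > 0" "\<bar>a\<bar> * ea < e / 2" "\<bar>b\<bar> * eb < e / 2"
      using \<open>e > 0\<close> by (simp_all add: ea_def eb_def field_simps)
    obtain f1 where "f1 \<in> X" "L2norm M (\<lambda>x. f x - f1 x) < ea"
      using f \<open>ea > 0\<close> unfolding L2closure_def by blast
    obtain g1 where "g1 \<in> X" "L2norm M (\<lambda>x. g x - g1 x) < eb"
      using g \<open>eb > 0\<close> unfolding L2closure_def by blast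
    have "L2norm M (\<lambda>x. a * f x + b * g x - (a * f1 x + b * g1 x))
        = L2norm M (\<lambda>x. a * (f x - f1 x) + b * (g x - g1 x))"
      by (simp add: algebra_simps)
    also have "\<dots> \<le> \<bar>a\<bar> * L2norm M (\<lambda>x. f x - f1 x) + \<bar>b\<bar> * L2norm M (\<lambda>x. g x - g1 x)"
      using L2norm_add_le[OF L2_cmult L2_cmult, OF L2_diff L2_diff, OF fL _ gL, of f1 g1 a b]
        \<open>f1 \<in> X\<close> \<open>g1 \<in> X\<close> X by (auto simp: L2norm_cmult)
    also have "\<dots> \<le> \<bar>a\<bar> * ea + \<bar>b\<bar> * eb"
      using \<open>L2norm M (\<lambda>x. f x - f1 x) < ea\<close> \<open>L2norm M (\<lambda>x. g x - g1 x) < eb\<close>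
      by (intro add_mono mult_left_mono) auto
    also have "\<dots> < e"
      using \<open>\<bar>a\<bar> * ea < e / 2\<close> \<open>\<bar>b\<bar> * eb < e / 2\<close> by linarith
    finally show ?thesis
      using X_lincomb[OF \<open>f1 \<in> X\<close> \<open>g1 \<in> X\<close>] by force
  qed
  then show ?thesis
    using L2_lincomb[OF fL gL] by (auto simp: L2closure_def)
qed

lemma tangent_set_subset_L2: "tangent_set lam Model P \<subseteq> L2 P"
  by (auto simp: tangent_set_def)

lemma tangent_set_subset_tangent_space: "tangent_set lam Model P \<subseteq> tangent_space lam Model P"
  unfolding tangent_space_def
  using subset_L2closure[OF linspan_subset_L2[OF tangent_set_subset_L2]] subset_linspan by blast

lemma tangent_space_lincomb:
  assumes "f \<in> tangent_space lam Model P" and "g \<in> tangent_space lam Model P"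
  shows "(\<lambda>x. a * f x + b * g x) \<in> tangent_space lam Model P"
  using assms unfolding tangent_space_def
  by (intro L2closure_lincomb linspan_subset_L2 tangent_set_subset_L2 linspan_lincomb)

lemma bounded_linear_on_Lipschitz:
  assumes "bounded_linear_on P T \<eta>"
    and T_diff: "\<And>f g. f \<in> T \<Longrightarrow> g \<in> T \<Longrightarrow> (\<lambda>x. f x - g x) \<in> T"
  obtains K where "K \<ge> 0"
    and "\<forall>s\<in>T. \<forall>t\<in>T. norm (\<eta> s - \<eta> t) \<le> K * L2norm P (\<lambda>x. s x - t x)"
proof -
  obtain C where C: "\<And>s. s \<in> T \<Longrightarrow> norm (\<eta> s) \<le> C * L2norm P s"
    and linear: "\<And>s t a b. s \<in> T \<Longrightarrow> t \<in> T \<Longrightarrow> \<eta> (\<lambda>x. a * s x + b * t x) = a *\<^sub>R \<eta> s + b *\<^sub>R \<eta> t"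
    using assms(1) unfolding bounded_linear_on_def by blast
  have "norm (\<eta> s - \<eta> t) \<le> \<bar>C\<bar> * L2norm P (\<lambda>x. s x - t x)" if "s \<in> T" "t \<in> T" for s t
  proof -
    have "\<eta> s - \<eta> t = \<eta> (\<lambda>x. s x - t x)"
      using linear[OF that, of 1 "-1"] by simp
    also have "norm \<dots> \<le> C * L2norm P (\<lambda>x. s x - t x)"
      using C T_diff that by blast
    also have "\<dots> \<le> \<bar>C\<bar> * L2norm P (\<lambda>x. s x - t x)"
      using L2norm_nonneg by (intro mult_right_mono) auto
    finally show ?thesis .
  qed
  then show ?thesis
    using that[of "\<bar>C\<bar>"] by simp
qed

section \<open>Square-root densities and the Hellinger distance\<close>

definition dominated_finite_measure :: "'a measure \<Rightarrow> 'a measure \<Rightarrow> bool" where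
  "dominated_finite_measure lam Q \<longleftrightarrow>
     finite_measure Q \<and> sets Q = sets lam \<and> absolutely_continuous lam Q"

lemma
  assumes lam: "sigma_finite_measure lam" and Q: "dominated_finite_measure lam Q"
    and f: "f \<in> L2 Q"
  shows L2_mult_sqrt_dens: "(\<lambda>x. f x * sqrt (dens lam Q x)) \<in> L2 lam"
    and L2norm_mult_sqrt_dens: "L2norm lam (\<lambda>x. f x * sqrt (dens lam Q x)) = L2norm Q f"
proof -
  have Q_sf: "sigma_finite_measure Q" and "sets Q = sets lam" "absolutely_continuous lam Q"
    using Q by (auto simp: dominated_finite_measure_def finite_measure_def)
  have "f \<in> borel_measurable Q"
    using f by (simp add: L2_def)
  then have [measurable]: "f \<in> borel_measurable lam"
    using measurable_cong_sets[OF \<open>sets Q = sets lam\<close> refl] by blast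
  note RN_deriv = sigma_finite_measure.RN_deriv_integrable sigma_finite_measure.RN_deriv_integral
  note RN_deriv_sq = RN_deriv[OF lam Q_sf \<open>absolutely_continuous lam Q\<close> \<open>sets Q = sets lam\<close>,
      of "\<lambda>x. (f x)\<^sup>2"]
  have sq: "(f x * sqrt (dens lam Q x))\<^sup>2 = enn2real (RN_deriv lam Q x) * (f x)\<^sup>2" for x
    by (simp add: dens_def power_mult_distrib)
  have "(\<lambda>x. f x * sqrt (dens lam Q x)) \<in> borel_measurable lam"
    unfolding dens_def by measurable
  moreover have "integrable lam (\<lambda>x. (f x * sqrt (dens lam Q x))\<^sup>2)"
    unfolding sq using f RN_deriv_sq by (simp add: L2_def)
  ultimately show "(\<lambda>x. f x * sqrt (dens lam Q x)) \<in> L2 lam"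
    by (simp add: L2_def)
  show "L2norm lam (\<lambda>x. f x * sqrt (dens lam Q x)) = L2norm Q f"
    using RN_deriv_sq unfolding L2norm_def sq by simp
qed

lemma sqrt_dens_L2:
  assumes "sigma_finite_measure lam" and Q: "dominated_finite_measure lam Q"
  shows "(\<lambda>x. sqrt (dens lam Q x)) \<in> L2 lam"
proof -
  have "(\<lambda>x. 1) \<in> L2 Q"
    using Q by (simp add: L2_def dominated_finite_measure_def finite_measure.integrable_const)
  from L2_mult_sqrt_dens[OF assms this] show ?thesis by simp
qed

lemma hellinger_commute: "hellinger lam Q Q' = hellinger lam Q' Q"
  by (simp add: hellinger_def power2_commute)

text \<open>The quantity that must be \<open>o(\<epsilon>)\<close> for \<open>Q = P\<^sub>\<epsilon>\<close> in the definition of a submodel with score \<open>s\<close>.\<close>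
definition dqm_remainder ::
  "'a measure \<Rightarrow> 'a measure \<Rightarrow> ('a \<Rightarrow> real) \<Rightarrow> 'a measure \<Rightarrow> real \<Rightarrow> real" where
  "dqm_remainder lam P s Q \<epsilon> =
     L2norm lam (\<lambda>x. sqrt (dens lam Q x) - sqrt (dens lam P x) - \<epsilon> * s x * sqrt (dens lam P x) / 2)"

lemma hellinger_le_dqm_remainders:
  assumes lam: "sigma_finite_measure lam" and P: "dominated_finite_measure lam P"
    and "dominated_finite_measure lam Q1" "dominated_finite_measure lam Q2"
    and s1: "s1 \<in> L2 P" and s2: "s2 \<in> L2 P" and "0 \<le> \<epsilon>"
  shows "hellinger lam Q1 Q2 \<le> dqm_remainder lam P s1 Q1 \<epsilon> + dqm_remainder lam P s2 Q2 \<epsilon>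
           + \<epsilon> / 2 * L2norm P (\<lambda>x. s1 x - s2 x)"
proof -
  define \<rho> where "\<rho> = (\<lambda>x. sqrt (dens lam P x))"
  define R1 where "R1 = (\<lambda>x. sqrt (dens lam Q1 x) - \<rho> x - \<epsilon> * s1 x * \<rho> x / 2)"
  define R2 where "R2 = (\<lambda>x. sqrt (dens lam Q2 x) - \<rho> x - \<epsilon> * s2 x * \<rho> x / 2)"
  have score_term: "(\<lambda>x. \<epsilon> * s x * \<rho> x / 2) \<in> L2 lam" if "s \<in> L2 P" for s
    using L2_cmult[OF L2_mult_sqrt_dens[OF lam P that], of "\<epsilon> / 2"] by (simp add: \<rho>_def field_simps)
  have "\<rho> \<in> L2 lam"
    unfolding \<rho>_def using sqrt_dens_L2[OF lam P] .
  then have "R1 \<in> L2 lam" "R2 \<in> L2 lam"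
    unfolding R1_def R2_def
    using sqrt_dens_L2[OF lam] assms(3,4) score_term[OF s1] score_term[OF s2] by (auto intro!: L2_diff)
  have "hellinger lam Q1 Q2 = L2norm lam (\<lambda>x. (R1 x - R2 x) + \<epsilon> / 2 * ((s1 x - s2 x) * \<rho> x))"
    unfolding hellinger_def L2norm_def R1_def R2_def by (simp add: algebra_simps)
  also have "\<dots> \<le> L2norm lam (\<lambda>x. R1 x - R2 x) + L2norm lam (\<lambda>x. \<epsilon> / 2 * ((s1 x - s2 x) * \<rho> x))"
    unfolding \<rho>_def
    by (intro L2norm_add_le L2_diff L2_cmult L2_mult_sqrt_dens[OF lam P] \<open>R1 \<in> L2 lam\<close> \<open>R2 \<in> L2 lam\<close> s1 s2)
  also have "\<dots> = L2norm lam (\<lambda>x. R1 x - R2 x) + \<epsilon> / 2 * L2norm P (\<lambda>x. s1 x - s2 x)"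
    unfolding L2norm_cmult \<rho>_def L2norm_mult_sqrt_dens[OF lam P L2_diff[OF s1 s2]] using \<open>0 \<le> \<epsilon>\<close> by simp
  also have "\<dots> \<le> L2norm lam R1 + L2norm lam R2 + \<epsilon> / 2 * L2norm P (\<lambda>x. s1 x - s2 x)"
    using L2norm_diff_le[OF \<open>R1 \<in> L2 lam\<close> \<open>R2 \<in> L2 lam\<close>] by linarith
  finally show ?thesis
    unfolding dqm_remainder_def R1_def R2_def \<rho>_def .
qed

lemma hellinger_le_dqm_remainder:
  assumes "sigma_finite_measure lam" "dominated_finite_measure lam P"
    and "dominated_finite_measure lam Q" and "s \<in> L2 P" and "0 \<le> \<epsilon>"
  shows "hellinger lam P Q \<le> dqm_remainder lam P s Q \<epsilon> + \<epsilon> / 2 * L2norm P s"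
  using hellinger_le_dqm_remainders[OF assms(1,2,3,2,4) _ assms(5), of "\<lambda>_. 0"]
  by (simp add: L2_def dqm_remainder_def L2norm_def hellinger_commute)

section \<open>Differentiability along submodels\<close>

lemma
  assumes "Pe \<in> submodels lam Model P s"
  shows submodels_eventually_in_model: "\<forall>\<^sub>F \<epsilon> in at_right 0. Pe \<epsilon> \<in> Model"
    and submodels_dqm_remainder_tendsto:
      "((\<lambda>\<epsilon>. dqm_remainder lam P s (Pe \<epsilon>) \<epsilon> / \<epsilon>) \<longlongrightarrow> 0) (at_right 0)"
proof -
  obtain \<delta> :: real where "\<delta> > 0" and "\<forall>\<epsilon>\<in>{0..<\<delta>}. Pe \<epsilon> \<in> Model"
    and "((\<lambda>\<epsilon>. dqm_remainder lam P s (Pe \<epsilon>) \<epsilon> / \<epsilon>) \<longlongrightarrow> 0) (at_right 0)"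
    using assms unfolding submodels_def dqm_remainder_def by blast
  then show "\<forall>\<^sub>F \<epsilon> in at_right 0. Pe \<epsilon> \<in> Model"
    and "((\<lambda>\<epsilon>. dqm_remainder lam P s (Pe \<epsilon>) \<epsilon> / \<epsilon>) \<longlongrightarrow> 0) (at_right 0)"
    unfolding eventually_at_right_field by auto
qed

lemma eventually_submodel_hellinger_le:
  assumes lam: "sigma_finite_measure lam"
    and dominated: "\<forall>Q\<in>Model. dominated_finite_measure lam Q" and "P \<in> Model"
    and "s \<in> L2 P" and Pe: "Pe \<in> submodels lam Model P s" and "\<delta> > 0"
  shows "\<forall>\<^sub>F \<epsilon> in at_right 0. Pe \<epsilon> \<in> Model \<and> hellinger lam P (Pe \<epsilon>) \<le> \<delta>"
proof -
  have "((\<lambda>\<epsilon>. dqm_remainder lam P s (Pe \<epsilon>) \<epsilon> / \<epsilon> * \<epsilon> + \<epsilon> / 2 * L2norm P s) \<longlongrightarrow> 0 * 0 + 0 / 2 * L2norm P s)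
      (at_right 0)"
    by (intro tendsto_intros submodels_dqm_remainder_tendsto[OF Pe]) simp
  then have "\<forall>\<^sub>F \<epsilon> in at_right 0. dqm_remainder lam P s (Pe \<epsilon>) \<epsilon> / \<epsilon> * \<epsilon> + \<epsilon> / 2 * L2norm P s < \<delta>"
    using \<open>\<delta> > 0\<close> by (simp add: order_tendstoD)
  with submodels_eventually_in_model[OF Pe] eventually_at_right_less[of 0]
  show ?thesis
  proof eventually_elim
    case (elim \<epsilon>)
    then show ?case
      using hellinger_le_dqm_remainder[OF lam, of P "Pe \<epsilon>" s \<epsilon>] dominated \<open>P \<in> Model\<close> \<open>s \<in> L2 P\<close>
      by simp
  qed
qed

lemma eventually_diff_quotient_le:
  fixes \<nu> :: "'a measure \<Rightarrow> 'b::real_normed_vector"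
  assumes lam: "sigma_finite_measure lam"
    and dominated: "\<forall>Q\<in>Model. dominated_finite_measure lam Q" and "P \<in> Model"
    and lipschitz: "\<forall>P1\<in>{Q\<in>Model. hellinger lam P Q \<le> \<delta>}. \<forall>P2\<in>{Q\<in>Model. hellinger lam P Q \<le> \<delta>}.
        norm (\<nu> P1 - \<nu> P2) \<le> c * hellinger lam P1 P2"
    and "0 \<le> c" and "0 < \<delta>"
    and \<eta>_lipschitz: "norm (\<eta> s - \<eta> s') \<le> K * L2norm P (\<lambda>x. s x - s' x)"
    and "s \<in> L2 P" and "s' \<in> L2 P"
    and Pe: "Pe \<in> submodels lam Model P s" and Q: "Q \<in> submodels lam Model P s'"
  shows "\<forall>\<^sub>F \<epsilon> in at_right 0. norm (\<nu> (Pe \<epsilon>) - \<nu> P - \<epsilon> *\<^sub>R \<eta> s) / \<epsilon>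
     \<le> norm (\<nu> (Q \<epsilon>) - \<nu> P - \<epsilon> *\<^sub>R \<eta> s') / \<epsilon>
       + c * (dqm_remainder lam P s (Pe \<epsilon>) \<epsilon> / \<epsilon> + dqm_remainder lam P s' (Q \<epsilon>) \<epsilon> / \<epsilon>)
       + (c / 2 + K) * L2norm P (\<lambda>x. s x - s' x)"
  using eventually_submodel_hellinger_le[OF lam dominated \<open>P \<in> Model\<close> \<open>s \<in> L2 P\<close> Pe \<open>0 < \<delta>\<close>]
    eventually_submodel_hellinger_le[OF lam dominated \<open>P \<in> Model\<close> \<open>s' \<in> L2 P\<close> Q \<open>0 < \<delta>\<close>]
    eventually_at_right_less[of 0]
proof eventually_elim
  case (elim \<epsilon>)
  define R where "R = dqm_remainder lam P s (Pe \<epsilon>) \<epsilon> + dqm_remainder lam P s' (Q \<epsilon>) \<epsilon>"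
  define d where "d = L2norm P (\<lambda>x. s x - s' x)"
  have "\<nu> (Pe \<epsilon>) - \<nu> P - \<epsilon> *\<^sub>R \<eta> s
      = (\<nu> (Pe \<epsilon>) - \<nu> (Q \<epsilon>)) + (\<nu> (Q \<epsilon>) - \<nu> P - \<epsilon> *\<^sub>R \<eta> s') - \<epsilon> *\<^sub>R (\<eta> s - \<eta> s')"
    by (simp add: algebra_simps)
  then have "norm (\<nu> (Pe \<epsilon>) - \<nu> P - \<epsilon> *\<^sub>R \<eta> s)
      \<le> norm (\<nu> (Pe \<epsilon>) - \<nu> (Q \<epsilon>)) + norm (\<nu> (Q \<epsilon>) - \<nu> P - \<epsilon> *\<^sub>R \<eta> s') + \<epsilon> * norm (\<eta> s - \<eta> s')"
    using elim norm_triangle_ineq4 norm_triangle_ineq by (smt (verit) norm_scaleR)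
  also have "\<dots> \<le> c * (R + \<epsilon> / 2 * d) + norm (\<nu> (Q \<epsilon>) - \<nu> P - \<epsilon> *\<^sub>R \<eta> s') + \<epsilon> * (K * d)"
  proof -
    have "hellinger lam (Pe \<epsilon>) (Q \<epsilon>) \<le> R + \<epsilon> / 2 * d"
      unfolding R_def d_def using elim
      by (intro hellinger_le_dqm_remainders[OF lam] \<open>s \<in> L2 P\<close> \<open>s' \<in> L2 P\<close>)
        (use dominated \<open>P \<in> Model\<close> in auto)
    then have "c * hellinger lam (Pe \<epsilon>) (Q \<epsilon>) \<le> c * (R + \<epsilon> / 2 * d)"
      using \<open>0 \<le> c\<close> by (rule mult_left_mono)
    moreover have "norm (\<nu> (Pe \<epsilon>) - \<nu> (Q \<epsilon>)) \<le> c * hellinger lam (Pe \<epsilon>) (Q \<epsilon>)"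
      using lipschitz elim by blast
    moreover have "\<epsilon> * norm (\<eta> s - \<eta> s') \<le> \<epsilon> * (K * d)"
      using \<eta>_lipschitz elim by (simp add: d_def)
    ultimately show ?thesis by linarith
  qed
  also have "\<dots> = \<epsilon> * (norm (\<nu> (Q \<epsilon>) - \<nu> P - \<epsilon> *\<^sub>R \<eta> s') / \<epsilon> + c * (R / \<epsilon>) + (c / 2 + K) * d)"
    using elim by (simp add: field_simps)
  finally show ?case
    using elim by (simp add: R_def d_def pos_divide_le_eq add_divide_distrib mult.commute)
qed

lemma tendsto_zero_if_approximable:
  fixes f :: "'a \<Rightarrow> real"
  assumes "\<And>r. r > 0 \<Longrightarrow> \<exists>g. (g \<longlongrightarrow> 0) F \<and> (\<forall>\<^sub>F x in F. \<bar>f x\<bar> \<le> g x + r)"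
  shows "(f \<longlongrightarrow> 0) F"
proof (rule tendstoI)
  fix e :: real assume "e > 0"
  then obtain g where g: "(g \<longlongrightarrow> 0) F" and bound: "\<forall>\<^sub>F x in F. \<bar>f x\<bar> \<le> g x + e / 2"
    using assms[of "e / 2"] by auto
  have "\<forall>\<^sub>F x in F. g x < e / 2"
    using order_tendstoD(2)[OF g, of "e / 2"] \<open>e > 0\<close> by simp
  with bound show "\<forall>\<^sub>F x in F. dist (f x) 0 < e"
    by eventually_elim simp
qed

lemma diff_quotient_tendsto_zero_if_dense_scores:
  fixes \<nu> :: "'a measure \<Rightarrow> 'b::real_normed_vector"
  assumes lam: "sigma_finite_measure lam"
    and dominated: "\<forall>Q\<in>Model. dominated_finite_measure lam Q" and "P \<in> Model"
    and lipschitz: "\<forall>P1\<in>{Q\<in>Model. hellinger lam P Q \<le> \<delta>}. \<forall>P2\<in>{Q\<in>Model. hellinger lam P Q \<le> \<delta>}.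
        norm (\<nu> P1 - \<nu> P2) \<le> c * hellinger lam P1 P2"
    and "0 \<le> c" and "0 < \<delta>"
    and \<eta>_lipschitz: "\<forall>s\<in>T. \<forall>t\<in>T. norm (\<eta> s - \<eta> t) \<le> K * L2norm P (\<lambda>x. s x - t x)"
    and "0 \<le> K"
    and "S \<subseteq> L2 P" and "S \<subseteq> T"
    and S_paths: "\<forall>s'\<in>S. \<exists>Q\<in>submodels lam Model P s'.
        ((\<lambda>\<epsilon>. norm (\<nu> (Q \<epsilon>) - \<nu> P - \<epsilon> *\<^sub>R \<eta> s') / \<epsilon>) \<longlongrightarrow> 0) (at_right 0)"
    and "s \<in> T" and "s \<in> L2closure P S" and Pe: "Pe \<in> submodels lam Model P s"
  shows "((\<lambda>\<epsilon>. norm (\<nu> (Pe \<epsilon>) - \<nu> P - \<epsilon> *\<^sub>R \<eta> s) / \<epsilon>) \<longlongrightarrow> 0) (at_right 0)"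
proof (rule tendsto_zero_if_approximable)
  fix r :: real assume "r > 0"
  then have "r / (c / 2 + K + 1) > 0"
    using \<open>0 \<le> c\<close> \<open>0 \<le> K\<close> by simp
  then obtain s' where "s' \<in> S" and close: "L2norm P (\<lambda>x. s x - s' x) < r / (c / 2 + K + 1)"
    using \<open>s \<in> L2closure P S\<close> unfolding L2closure_def by blast
  then obtain Q where Q: "Q \<in> submodels lam Model P s'"
    and Q_diff: "((\<lambda>\<epsilon>. norm (\<nu> (Q \<epsilon>) - \<nu> P - \<epsilon> *\<^sub>R \<eta> s') / \<epsilon>) \<longlongrightarrow> 0) (at_right 0)"
    using S_paths by blast
  have "s \<in> L2 P" "s' \<in> L2 P"
    using \<open>s \<in> L2closure P S\<close> \<open>s' \<in> S\<close> \<open>S \<subseteq> L2 P\<close> by (auto simp: L2closure_def)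
  then have bound: "\<forall>\<^sub>F \<epsilon> in at_right 0. norm (\<nu> (Pe \<epsilon>) - \<nu> P - \<epsilon> *\<^sub>R \<eta> s) / \<epsilon>
     \<le> norm (\<nu> (Q \<epsilon>) - \<nu> P - \<epsilon> *\<^sub>R \<eta> s') / \<epsilon>
       + c * (dqm_remainder lam P s (Pe \<epsilon>) \<epsilon> / \<epsilon> + dqm_remainder lam P s' (Q \<epsilon>) \<epsilon> / \<epsilon>)
       + (c / 2 + K) * L2norm P (\<lambda>x. s x - s' x)"
    using \<eta>_lipschitz \<open>s \<in> T\<close> \<open>s' \<in> S\<close> \<open>S \<subseteq> T\<close>
    by (intro eventually_diff_quotient_le[OF lam dominated \<open>P \<in> Model\<close> lipschitz \<open>0 \<le> c\<close> \<open>0 < \<delta>\<close>]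
        Pe Q) auto
  have "(c / 2 + K + 1) * L2norm P (\<lambda>x. s x - s' x) < r"
    using close \<open>0 \<le> c\<close> \<open>0 \<le> K\<close> by (simp add: pos_less_divide_eq mult.commute)
  then have "(c / 2 + K) * L2norm P (\<lambda>x. s x - s' x) \<le> r"
    using L2norm_nonneg[of P "\<lambda>x. s x - s' x"] by (simp add: distrib_right)
  from bound eventually_at_right_less[of 0]
  have "\<forall>\<^sub>F \<epsilon> in at_right 0. \<bar>norm (\<nu> (Pe \<epsilon>) - \<nu> P - \<epsilon> *\<^sub>R \<eta> s) / \<epsilon>\<bar>
     \<le> norm (\<nu> (Q \<epsilon>) - \<nu> P - \<epsilon> *\<^sub>R \<eta> s') / \<epsilon>
       + c * (dqm_remainder lam P s (Pe \<epsilon>) \<epsilon> / \<epsilon> + dqm_remainder lam P s' (Q \<epsilon>) \<epsilon> / \<epsilon>) + r"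
    by eventually_elim (use \<open>(c / 2 + K) * L2norm P (\<lambda>x. s x - s' x) \<le> r\<close> in simp)
  moreover have "((\<lambda>\<epsilon>. norm (\<nu> (Q \<epsilon>) - \<nu> P - \<epsilon> *\<^sub>R \<eta> s') / \<epsilon>
      + c * (dqm_remainder lam P s (Pe \<epsilon>) \<epsilon> / \<epsilon> + dqm_remainder lam P s' (Q \<epsilon>) \<epsilon> / \<epsilon>)) \<longlongrightarrow> 0)
      (at_right 0)"
    using tendsto_add[OF Q_diff tendsto_mult_right_zero[OF tendsto_add_zero[OF
          submodels_dqm_remainder_tendsto[OF Pe] submodels_dqm_remainder_tendsto[OF Q]]]]
    by simp
  ultimately show "\<exists>g. (g \<longlongrightarrow> 0) (at_right 0) \<and> (\<forall>\<^sub>F \<epsilon> in at_right 0.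
      \<bar>norm (\<nu> (Pe \<epsilon>) - \<nu> P - \<epsilon> *\<^sub>R \<eta> s) / \<epsilon>\<bar> \<le> g \<epsilon> + r)"
    by blast
qed

theorem lemma2:
  fixes lam :: "'a::polish_space measure"
    and Model :: "'a measure set"
    and P :: "'a measure"
    and \<nu> :: "'a measure \<Rightarrow> 'b::{real_inner, polish_space}"
    and \<eta> :: "('a \<Rightarrow> real) \<Rightarrow> 'b"
  assumes lam_borel: "sets lam = sets borel"
    and lam_sf: "sigma_finite_measure lam"
    and model: "\<And>Q. Q \<in> Model \<Longrightarrow> prob_space Q \<and> sets Q = sets lam \<and> absolutely_continuous lam Q"
    and P_in: "P \<in> Model"
    and eta_bl: "bounded_linear_on P (tangent_space lam Model P) \<eta>"
    and S_sub: "S \<subseteq> L2 P"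
    and S_dense: "L2closure P S = tangent_space lam Model P"
    and S_paths: "\<forall>s\<in>S. \<exists>Pe\<in>submodels lam Model P s.
                    ((\<lambda>\<epsilon>. norm (\<nu> (Pe \<epsilon>) - \<nu> P - \<epsilon> *\<^sub>R \<eta> s) / \<epsilon>) \<longlongrightarrow> 0) (at_right 0)"
    and lipschitz: "\<exists>c>0. \<exists>\<delta>>0. \<forall>P1\<in>{Q\<in>Model. hellinger lam P Q \<le> \<delta>}.
                    \<forall>P2\<in>{Q\<in>Model. hellinger lam P Q \<le> \<delta>}.
                      norm (\<nu> P1 - \<nu> P2) \<le> c * hellinger lam P1 P2"
  shows "pathwise_differentiable lam Model \<nu> P \<eta>"
proof -
  obtain c \<delta> where "c > 0" "\<delta> > 0" and lip: "\<forall>P1\<in>{Q\<in>Model. hellinger lam P Q \<le> \<delta>}.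
      \<forall>P2\<in>{Q\<in>Model. hellinger lam P Q \<le> \<delta>}. norm (\<nu> P1 - \<nu> P2) \<le> c * hellinger lam P1 P2"
    using lipschitz by blast
  obtain K where "K \<ge> 0" and \<eta>_lip: "\<forall>s\<in>tangent_space lam Model P. \<forall>t\<in>tangent_space lam Model P.
      norm (\<eta> s - \<eta> t) \<le> K * L2norm P (\<lambda>x. s x - t x)"
    using bounded_linear_on_Lipschitz[OF eta_bl] tangent_space_lincomb[of _ lam Model P _ 1 "-1"] by auto
  have dominated: "\<forall>Q\<in>Model. dominated_finite_measure lam Q"
    using model by (simp add: dominated_finite_measure_def prob_space_def)
  have S_tangent: "S \<subseteq> tangent_space lam Model P"
    using subset_L2closure[OF S_sub] S_dense by blast
  show ?thesis
    unfolding pathwise_differentiable_def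
  proof (intro conjI eta_bl ballI)
    fix s Pe assume "s \<in> tangent_set lam Model P" and Pe: "Pe \<in> submodels lam Model P s"
    then have "s \<in> tangent_space lam Model P"
      using tangent_set_subset_tangent_space by blast
    then show "((\<lambda>\<epsilon>. norm (\<nu> (Pe \<epsilon>) - \<nu> P - \<epsilon> *\<^sub>R \<eta> s) / \<epsilon>) \<longlongrightarrow> 0) (at_right 0)"
      using \<open>c > 0\<close> \<open>\<delta> > 0\<close> \<open>K \<ge> 0\<close> S_dense
      by (intro diff_quotient_tendsto_zero_if_dense_scores[OF lam_sf dominated P_in lip _ _ \<eta>_lip _
            S_sub S_tangent S_paths _ _ Pe]) auto
  qed
qed

end
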